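(* Let $H=\sum_{i=1}^m H_i$ be an instance of the $k$-local Hamiltonian problem on $n$ qubits and let $a\ge 0$. If there exists a state $|\Gamma\rangle$ such that $\langle\Gamma|H|\Gamma\rangle\le am$, then there exists a strategy for the $r$ entangled provers in Protocol $P$ that is accepted with probability at least $1-a/2$.
   Context: An instance of the $k$-local Hamiltonian problem on $n$ qubits is $H=\sum_{i=1}^m H_i$ on $(\mathbb{C}^2)^{\otimes n}$, each $H_i$ positive semidefinite of operator norm at most $1$ acting on a set $S_i\subseteq[n]$ of at most $k$ qubits (tensored with identity elsewhere). Let $\mathcal{C}$ be a quantum error-correcting code encoding $1$ logical qubit into $r$ physical qubits, which corrects all single-qubit Pauli errors and such that every codeword has maximally mixed reduced density matrix $I/2$ on any single qubit (e.g. the $5$-qubit code, $r=5$). Protocol $P$ (one round, $r$ provers who may share entanglement but not communicate): the verifier performs each of the following two tests with probability $1/2$. Test 1: pick $j\in[m]$ uniformly; ask every prover for its share of all qubits in $S_j$; decode each group of $r$ shares (one per prover) of each qubit of $S_j$ with the decoding map of $\mathcal{C}$, measure the resulting $k$-qubit state with $\{H_j, I-H_j\}$, and reject if the outcome is $H_j$. Test 2: pick $i\in[n]$ uniformly and a set $S\subseteq[n]$ of size $k$ uniformly among those containing $i$; with probability $1/2$ ask one uniformly random prover for its shares of all qubits in $S$ and the other $r-1$ provers for their share of qubit $i$ only; with probability $1/2$ ask all provers for their share of qubit $i$; in both cases reject unless the $r$ received shares of qubit $i$ lie in the codespace of $\mathcal{C}$ (projective measurement onto the codespace). *)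

theory Defs
  imports Complex_Main "HOL-Library.FuncSet"
begin

text \<open>A computational basis state of a register whose qubits are labelled by elements of a
finite set L of labels is a function from labels to bool that is False outside L.\<close>

type_synonym 'l bstate = "'l \<Rightarrow> bool"
type_synonym 'l qstate = "'l bstate \<Rightarrow> complex"
type_synonym 'l qop = "'l bstate \<Rightarrow> 'l bstate \<Rightarrow> complex"

definition basis :: "'l set \<Rightarrow> 'l bstate set" where
  "basis L = {x. \<forall>l. l \<notin> L \<longrightarrow> x l = False}"

definition restr :: "'l set \<Rightarrow> 'l bstate \<Rightarrow> 'l bstate" where
  "restr S x = (\<lambda>l. if l \<in> S then x l else False)"

definition merge :: "'l set \<Rightarrow> 'l bstate \<Rightarrow> 'l bstate \<Rightarrow> 'l bstate" where
  "merge A y z = (\<lambda>l. if l \<in> A then y l else z l)"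

definition apply_op :: "'l set \<Rightarrow> 'l qop \<Rightarrow> 'l qstate \<Rightarrow> 'l qstate" where
  "apply_op L A \<psi> = (\<lambda>x. \<Sum>y\<in>basis L. A x y * \<psi> y)"

definition inner :: "'l set \<Rightarrow> 'l qstate \<Rightarrow> 'l qstate \<Rightarrow> complex" where
  "inner L \<phi> \<psi> = (\<Sum>x\<in>basis L. cnj (\<phi> x) * \<psi> x)"

definition nrm2 :: "'l set \<Rightarrow> 'l qstate \<Rightarrow> real" where
  "nrm2 L \<psi> = (\<Sum>x\<in>basis L. (cmod (\<psi> x))\<^sup>2)"

text \<open>An operator acting on the qubits S (tensored with the identity on all other qubits).\<close>
definition lift :: "'l set \<Rightarrow> 'l qop \<Rightarrow> 'l qop" where
  "lift S A = (\<lambda>x y. if (\<forall>l. l \<notin> S \<longrightarrow> x l = y l) then A (restr S x) (restr S y) else 0)"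

definition hermitian :: "'l set \<Rightarrow> 'l qop \<Rightarrow> bool" where
  "hermitian L A \<longleftrightarrow> (\<forall>x\<in>basis L. \<forall>y\<in>basis L. A x y = cnj (A y x))"

definition psd :: "'l set \<Rightarrow> 'l qop \<Rightarrow> bool" where
  "psd L A \<longleftrightarrow> hermitian L A \<and> (\<forall>\<psi>. 0 \<le> Re (inner L \<psi> (apply_op L A \<psi>)))"

definition opnorm_le1 :: "'l set \<Rightarrow> 'l qop \<Rightarrow> bool" where
  "opnorm_le1 L A \<longleftrightarrow> (\<forall>\<psi>. nrm2 L (apply_op L A \<psi>) \<le> nrm2 L \<psi>)"

definition unitary_on :: "'l set \<Rightarrow> 'l qop \<Rightarrow> bool" where
  "unitary_on L U \<longleftrightarrow>
     (\<forall>x\<in>basis L. \<forall>y\<in>basis L.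
        (\<Sum>z\<in>basis L. cnj (U z x) * U z y) = (if x = y then 1 else 0)) \<and>
     (\<forall>x\<in>basis L. \<forall>y\<in>basis L.
        (\<Sum>z\<in>basis L. U x z * cnj (U y z)) = (if x = y then 1 else 0))"

definition klh_instance ::
  "nat \<Rightarrow> nat \<Rightarrow> nat \<Rightarrow> (nat \<Rightarrow> nat set) \<Rightarrow> (nat \<Rightarrow> nat qop) \<Rightarrow> bool" where
  "klh_instance n k m S h \<longleftrightarrow>
     (\<forall>j<m. S j \<subseteq> {..<n} \<and> card (S j) \<le> k \<and> psd (S j) (h j) \<and> opnorm_le1 (S j) (h j))"

definition hamiltonian :: "nat \<Rightarrow> (nat \<Rightarrow> nat set) \<Rightarrow> (nat \<Rightarrow> nat qop) \<Rightarrow> nat qop" where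
  "hamiltonian m S h = (\<lambda>x y. \<Sum>j<m. lift (S j) (h j) x y)"

text \<open>The code is given by its encoding (codewords enc False, enc True, an orthonormal
basis of the codespace) and its decoding map, a quantum channel from r qubits to one
qubit given by Kraus operators K t (t in T): K t b x is the entry for logical basis
state b and physical basis state x.\<close>

definition pauli :: "nat \<Rightarrow> bool \<Rightarrow> bool \<Rightarrow> complex" where
  "pauli P b c =
    (if P = 0 then (if b = c then 1 else 0)
     else if P = 1 then (if b \<noteq> c then 1 else 0)
     else if P = 2 then (if b = c then 0 else if b then \<i> else - \<i>)
     else (if b = c then (if b then -1 else 1) else 0))"

text \<open>Single-qubit Pauli P (0=I,1=X,2=Y,3=Z) acting on physical qubit q.\<close>
definition single_qubit_op :: "nat \<Rightarrow> (bool \<Rightarrow> bool \<Rightarrow> complex) \<Rightarrow> nat qop" where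
  "single_qubit_op q P = (\<lambda>x y. if (\<forall>l. l \<noteq> q \<longrightarrow> x l = y l) then P (x q) (y q) else 0)"

definition enc_state :: "(bool \<Rightarrow> nat qstate) \<Rightarrow> (bool \<Rightarrow> complex) \<Rightarrow> nat qstate" where
  "enc_state enc \<phi> = (\<lambda>x. \<phi> False * enc False x + \<phi> True * enc True x)"

definition codespace :: "nat \<Rightarrow> (bool \<Rightarrow> nat qstate) \<Rightarrow> nat qstate set" where
  "codespace r enc = {\<psi>. \<exists>\<phi>. \<forall>x\<in>basis {..<r}. \<psi> x = enc_state enc \<phi> x}"

text \<open>Decoding channel applied to the pure state psi (as density matrix), output 2x2 density matrix.\<close>
definition decode_pure ::
  "nat \<Rightarrow> 'c set \<Rightarrow> ('c \<Rightarrow> bool \<Rightarrow> nat bstate \<Rightarrow> complex) \<Rightarrow> nat qstate \<Rightarrow> bool \<Rightarrow> bool \<Rightarrow> complex" where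
  "decode_pure r T K \<psi> = (\<lambda>b b'. \<Sum>t\<in>T.
      (\<Sum>x\<in>basis {..<r}. K t b x * \<psi> x) * cnj (\<Sum>y\<in>basis {..<r}. K t b' y * \<psi> y))"

definition valid_code ::
  "nat \<Rightarrow> (bool \<Rightarrow> nat qstate) \<Rightarrow> 'c set \<Rightarrow> ('c \<Rightarrow> bool \<Rightarrow> nat bstate \<Rightarrow> complex) \<Rightarrow> bool" where
  "valid_code r enc T K \<longleftrightarrow>
     \<comment> \<open>codewords orthonormal\<close>
     (\<forall>b c. inner {..<r} (enc b) (enc c) = (if b = c then 1 else 0)) \<and>
     \<comment> \<open>decoding map is a quantum channel (trace preserving Kraus decomposition)\<close>
     finite T \<and>
     (\<forall>x\<in>basis {..<r}. \<forall>y\<in>basis {..<r}.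
        (\<Sum>t\<in>T. \<Sum>b\<in>UNIV. cnj (K t b x) * K t b y) = (if x = y then 1 else 0))"

definition corrects_single_paulis ::
  "nat \<Rightarrow> (bool \<Rightarrow> nat qstate) \<Rightarrow> 'c set \<Rightarrow> ('c \<Rightarrow> bool \<Rightarrow> nat bstate \<Rightarrow> complex) \<Rightarrow> bool" where
  "corrects_single_paulis r enc T K \<longleftrightarrow>
     (\<forall>q<r. \<forall>P<4. \<forall>\<phi>::bool \<Rightarrow> complex. (cmod (\<phi> False))\<^sup>2 + (cmod (\<phi> True))\<^sup>2 = 1 \<longrightarrow>
        decode_pure r T K (apply_op {..<r} (single_qubit_op q (pauli P)) (enc_state enc \<phi>))
          = (\<lambda>b b'. \<phi> b * cnj (\<phi> b')))"

text \<open>Reduced density matrix of psi on physical qubit q is I/2.\<close>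
definition single_marginals_mixed :: "nat \<Rightarrow> (bool \<Rightarrow> nat qstate) \<Rightarrow> bool" where
  "single_marginals_mixed r enc \<longleftrightarrow>
     (\<forall>\<psi>\<in>codespace r enc. nrm2 {..<r} \<psi> = 1 \<longrightarrow>
       (\<forall>q<r. \<forall>b c. (\<Sum>z\<in>basis ({..<r} - {q}). \<psi> (z(q := b)) * cnj (\<psi> (z(q := c))))
                     = (if b = c then 1/2 else 0)))"

text \<open>Qubits held by the provers: Sh p i is the slot of prover p holding (after the
prover's local unitary) its share of qubit i; Pv p t are private qubits of prover p.\<close>
datatype lab = Sh nat nat | Pv nat nat

definition prover_labels :: "nat \<Rightarrow> nat \<Rightarrow> nat \<Rightarrow> lab set" where
  "prover_labels n d p = {Sh p i | i. i < n} \<union> {Pv p t | t. t < d}"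

definition all_labels :: "nat \<Rightarrow> nat \<Rightarrow> nat \<Rightarrow> lab set" where
  "all_labels r n d = (\<Union>p<r. prover_labels n d p)"

definition share_labels :: "nat \<Rightarrow> nat set \<Rightarrow> lab set" where
  "share_labels r Q = {Sh p i | p i. p < r \<and> i \<in> Q}"

text \<open>The r shares of qubit i, as a basis state of the r physical qubits of the code.\<close>
definition shares_of :: "nat \<Rightarrow> nat \<Rightarrow> lab bstate \<Rightarrow> nat bstate" where
  "shares_of r i y = (\<lambda>p. if p < r then y (Sh p i) else False)"

text \<open>A strategy: number d of private qubits per prover, shared state psi of all provers,
and for every prover p and question Q (set of qubits whose shares are asked) a unitary
on prover p's qubits; the answer consists of the slots Sh p i, i in Q.\<close>
definition valid_strategy ::
  "nat \<Rightarrow> nat \<Rightarrow> nat \<Rightarrow> lab qstate \<Rightarrow> (nat \<Rightarrow> nat set \<Rightarrow> lab qop) \<Rightarrow> bool" where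
  "valid_strategy r n d \<psi> U \<longleftrightarrow>
     nrm2 (all_labels r n d) \<psi> = 1 \<and>
     (\<forall>p<r. \<forall>Q. unitary_on (prover_labels n d p) (U p Q))"

definition post_state ::
  "nat \<Rightarrow> nat \<Rightarrow> nat \<Rightarrow> lab qstate \<Rightarrow> (nat \<Rightarrow> nat set \<Rightarrow> lab qop) \<Rightarrow> (nat \<Rightarrow> nat set) \<Rightarrow> lab qstate" where
  "post_state r n d \<psi> U Qs =
     foldr (\<lambda>p \<phi>. apply_op (all_labels r n d) (lift (prover_labels n d p) (U p (Qs p))) \<phi>)
       [0..<r] \<psi>"

text \<open>Test 1 for term j: decode each qubit of S j and measure {H_j, I - H_j}; rejection
probability = probability of outcome H_j.\<close>
definition test1_reject ::
  "nat \<Rightarrow> nat \<Rightarrow> nat \<Rightarrow> 'c set \<Rightarrow> ('c \<Rightarrow> bool \<Rightarrow> nat bstate \<Rightarrow> complex)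
   \<Rightarrow> nat set \<Rightarrow> nat qop \<Rightarrow> lab qstate \<Rightarrow> real" where
  "test1_reject r n d T K Sj hj \<phi> =
     (\<Sum>tt\<in>Pi\<^sub>E Sj (\<lambda>_. T). \<Sum>z\<in>basis (all_labels r n d - share_labels r Sj).
        (let v = (\<lambda>x. \<Sum>y\<in>basis (share_labels r Sj).
                     (\<Prod>i\<in>Sj. K (tt i) (x i) (shares_of r i y)) * \<phi> (merge (share_labels r Sj) y z))
         in Re (inner Sj v (apply_op Sj hj v))))"

text \<open>Test 2 acceptance: probability that the r shares of qubit i lie in the codespace.\<close>
definition test2_accept ::
  "nat \<Rightarrow> nat \<Rightarrow> nat \<Rightarrow> (bool \<Rightarrow> nat qstate) \<Rightarrow> nat \<Rightarrow> lab qstate \<Rightarrow> real" where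
  "test2_accept r n d enc i \<phi> =
     (\<Sum>z\<in>basis (all_labels r n d - share_labels r {i}). \<Sum>b\<in>UNIV.
        (cmod (\<Sum>y\<in>basis (share_labels r {i}).
                 cnj (enc b (shares_of r i y)) * \<phi> (merge (share_labels r {i}) y z)))\<^sup>2)"

definition ksets :: "nat \<Rightarrow> nat \<Rightarrow> nat \<Rightarrow> nat set set" where
  "ksets n k i = {S. S \<subseteq> {..<n} \<and> card S = k \<and> i \<in> S}"

definition accept_prob ::
  "nat \<Rightarrow> nat \<Rightarrow> nat \<Rightarrow> (nat \<Rightarrow> nat set) \<Rightarrow> (nat \<Rightarrow> nat qop) \<Rightarrow>
   nat \<Rightarrow> (bool \<Rightarrow> nat qstate) \<Rightarrow> 'c set \<Rightarrow> ('c \<Rightarrow> bool \<Rightarrow> nat bstate \<Rightarrow> complex) \<Rightarrow>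
   nat \<Rightarrow> lab qstate \<Rightarrow> (nat \<Rightarrow> nat set \<Rightarrow> lab qop) \<Rightarrow> real" where
  "accept_prob n k m S h r enc T K d \<psi> U =
     (1/2) * ((1 / real m) * (\<Sum>j<m.
                1 - test1_reject r n d T K (S j) (h j) (post_state r n d \<psi> U (\<lambda>_. S j))))
   + (1/2) * ((1 / real n) * (\<Sum>i<n. (1 / real (card (ksets n k i))) * (\<Sum>Q\<in>ksets n k i.
          (1/2) * ((1 / real r) * (\<Sum>p0<r.
                     test2_accept r n d enc i
                       (post_state r n d \<psi> U (\<lambda>p. if p = p0 then Q else {i}))))
        + (1/2) * test2_accept r n d enc i (post_state r n d \<psi> U (\<lambda>_. {i})))))"

end

theory Submission
  imports Defs
begin

text \<open>The honest provers share the state in which every qubit of \<Gamma> is encoded in the code,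
prover p holding physical qubit p of every code block, and they never act (no private qubits,
identity unitaries). Every group of shares then lies in the codespace, so Test 2 always accepts.
Since the code corrects the trivial error, decoding is exact on the codespace: the Kraus operators
satisfy \<open>\<Sum>t. \<langle>b|K t|enc c\<rangle> * cnj \<langle>b'|K t|enc c'\<rangle> = [b = c \<and> b' = c']\<close>. Hence the
decoded reduced state on \<open>S j\<close> is exactly the reduced state of \<Gamma>, Test 1 rejects with
probability \<open>\<langle>\<Gamma>|H j|\<Gamma>\<rangle>\<close>, and the acceptance probability is
\<open>1 - \<langle>\<Gamma>|H|\<Gamma>\<rangle> / (2 m) \<ge> 1 - a / 2\<close>.\<close>

lemma finite_basis: "finite L \<Longrightarrow> finite (basis L)"
proof -
  assume "finite L"
  have "basis L \<subseteq> (\<lambda>A l. l \<in> A) ` Pow L"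
  proof
    fix x assume "x \<in> basis L"
    hence "x = (\<lambda>l. l \<in> {l\<in>L. x l})" by (auto simp: basis_def)
    thus "x \<in> (\<lambda>A l. l \<in> A) ` Pow L" by blast
  qed
  thus ?thesis using \<open>finite L\<close> by (meson finite_Pow_iff finite_imageI finite_subset)
qed

lemma basis_eq_iff: "x \<in> basis L \<Longrightarrow> x' \<in> basis L \<Longrightarrow> x = x' \<longleftrightarrow> (\<forall>l\<in>L. x l = x' l)"
  by (auto simp: basis_def fun_eq_iff)

lemma sum_basis_merge:
  assumes "Q \<subseteq> L"
  shows "(\<Sum>x\<in>basis L. g x) = (\<Sum>y\<in>basis Q. \<Sum>z\<in>basis (L - Q). g (merge Q y z))"
proof -
  have "bij_betw (\<lambda>(y, z). merge Q y z) (basis Q \<times> basis (L - Q)) (basis L)"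
    by (rule bij_betw_byWitness[where f' = "\<lambda>x. (restr Q x, restr (L - Q) x)"])
       (use assms in \<open>auto simp: basis_def merge_def restr_def fun_eq_iff\<close>)
  then have "(\<Sum>x\<in>basis L. g x) = (\<Sum>(y, z)\<in>basis Q \<times> basis (L - Q). g (merge Q y z))"
    by (simp add: sum.reindex_bij_betw[symmetric] split_def)
  also have "\<dots> = (\<Sum>y\<in>basis Q. \<Sum>z\<in>basis (L - Q). g (merge Q y z))"
    by (rule sum.cartesian_product[symmetric])
  finally show ?thesis .
qed

lemma sum_sum_diagonal:
  "finite A \<Longrightarrow> (\<Sum>a\<in>A. \<Sum>b\<in>A. f a b * (if a = b then 1 else 0)) = (\<Sum>a\<in>A. f a a :: 'b::comm_semiring_1)"
  by (simp add: if_distrib[of "\<lambda>c. _ * c"] cong: if_cong)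

lemma prod_indicator:
  "finite R \<Longrightarrow> (\<Prod>i\<in>R. if P i then 1 else 0) = (if \<forall>i\<in>R. P i then 1 else 0 :: 'b::comm_semiring_1)"
  by (induction R rule: finite_induct) auto

lemma sum_mult_cnj_sums:
  "(\<Sum>i\<in>I. (\<Sum>a\<in>A. c a * f i a) * cnj (\<Sum>b\<in>B. d b * g i b))
     = (\<Sum>a\<in>A. \<Sum>b\<in>B. c a * cnj (d b) * (\<Sum>i\<in>I. f i a * cnj (g i b)))"
proof -
  have "(\<Sum>i\<in>I. (\<Sum>a\<in>A. c a * f i a) * cnj (\<Sum>b\<in>B. d b * g i b))
      = (\<Sum>i\<in>I. \<Sum>a\<in>A. \<Sum>b\<in>B. c a * cnj (d b) * (f i a * cnj (g i b)))"
    by (simp add: sum_product mult_ac)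
  also have "\<dots> = (\<Sum>a\<in>A. \<Sum>b\<in>B. \<Sum>i\<in>I. c a * cnj (d b) * (f i a * cnj (g i b)))"
    by (subst sum.swap) (simp add: sum.swap[of _ I])
  finally show ?thesis by (simp add: sum_distrib_left)
qed

lemma cmod_square_cnj: "(complex_of_real (cmod z))\<^sup>2 = z * cnj z"
  using complex_norm_square[of z] by simp

lemma nrm2_as_complex: "complex_of_real (nrm2 L \<psi>) = (\<Sum>x\<in>basis L. \<psi> x * cnj (\<psi> x))"
  by (simp add: nrm2_def cmod_square_cnj)

definition id_op :: "'l qop" where "id_op x y = (if x = y then 1 else 0)"

lemma apply_op_id_op: "finite L \<Longrightarrow> apply_op L id_op \<psi> x = (if x \<in> basis L then \<psi> x else 0)"
  by (simp add: apply_op_def id_op_def if_distrib[of "\<lambda>c. c * _"] finite_basis cong: if_cong)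

lemma lift_id_op: "lift S id_op = id_op"
  by (auto simp: lift_def id_op_def restr_def fun_eq_iff)

lemma unitary_on_id_op: "finite L \<Longrightarrow> unitary_on L id_op"
  by (simp add: unitary_on_def id_op_def finite_basis if_distrib[of cnj] if_distrib[of "\<lambda>c. c * _"]
      cong: if_cong)

lemma finite_all_labels: "finite (all_labels r n d)"
  by (auto simp: all_labels_def prover_labels_def)

lemma finite_prover_labels: "finite (prover_labels n d p)"
  by (auto simp: prover_labels_def)

lemma all_labels_no_private: "all_labels r n 0 = share_labels r {..<n}"
  by (auto simp: all_labels_def prover_labels_def share_labels_def)

lemma share_labels_diff: "share_labels r A - share_labels r Q = share_labels r (A - Q)"
  by (auto simp: share_labels_def)

lemma share_labels_mono: "Q \<subseteq> A \<Longrightarrow> share_labels r Q \<subseteq> share_labels r A"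
  by (auto simp: share_labels_def)

lemma shares_of_merge:
  "shares_of r i (merge (share_labels r Q) y z) = (if i \<in> Q then shares_of r i y else shares_of r i z)"
  by (auto simp: shares_of_def merge_def share_labels_def fun_eq_iff)

lemma sum_share_basis_prod:
  fixes f :: "nat \<Rightarrow> nat bstate \<Rightarrow> 'b::comm_semiring_1"
  assumes "finite Q"
  shows "(\<Sum>y\<in>basis (share_labels r Q). \<Prod>i\<in>Q. f i (shares_of r i y))
           = (\<Prod>i\<in>Q. \<Sum>w\<in>basis {..<r}. f i w)"
proof -
  define join :: "(nat \<Rightarrow> nat bstate) \<Rightarrow> lab bstate" where
    "join g l = (case l of Sh p i \<Rightarrow> p < r \<and> i \<in> Q \<and> g i p | Pv _ _ \<Rightarrow> False)" for g l
  have "bij_betw (\<lambda>y. restrict (\<lambda>i. shares_of r i y) Q) (basis (share_labels r Q))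
          (Pi\<^sub>E Q (\<lambda>_. basis {..<r}))"
  proof (rule bij_betw_byWitness[where f' = join])
    show "\<forall>y\<in>basis (share_labels r Q). join (restrict (\<lambda>i. shares_of r i y) Q) = y"
      by (auto simp: join_def fun_eq_iff basis_def share_labels_def shares_of_def split: lab.split)
    show "\<forall>g\<in>Pi\<^sub>E Q (\<lambda>_. basis {..<r}). restrict (\<lambda>i. shares_of r i (join g)) Q = g"
      by (auto simp: join_def fun_eq_iff basis_def shares_of_def PiE_def extensional_def)
    show "(\<lambda>y. restrict (\<lambda>i. shares_of r i y) Q) ` basis (share_labels r Q) \<subseteq> Pi\<^sub>E Q (\<lambda>_. basis {..<r})"
      by (auto simp: basis_def shares_of_def)
    show "join ` Pi\<^sub>E Q (\<lambda>_. basis {..<r}) \<subseteq> basis (share_labels r Q)"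
      by (auto simp: join_def basis_def share_labels_def split: lab.split_asm)
  qed
  then have "(\<Sum>y\<in>basis (share_labels r Q). \<Prod>i\<in>Q. f i (shares_of r i y))
      = (\<Sum>g\<in>Pi\<^sub>E Q (\<lambda>_. basis {..<r}). \<Prod>i\<in>Q. f i (g i))"
    by (simp add: sum.reindex_bij_betw[symmetric])
  also have "\<dots> = (\<Prod>i\<in>Q. \<Sum>w\<in>basis {..<r}. f i w)"
    by (rule prod_sum_PiE[OF assms finite_basis, symmetric]) simp
  finally show ?thesis .
qed

section \<open>The encoded state\<close>

text \<open>Qubit i of \<Gamma> is encoded into the share slots \<open>Sh p i\<close>, \<open>p < r\<close>; \<open>encoded_amp r enc Q x\<close> is the
product codeword of the basis state x restricted to Q.\<close>

definition encoded_amp :: "nat \<Rightarrow> (bool \<Rightarrow> nat qstate) \<Rightarrow> nat set \<Rightarrow> nat bstate \<Rightarrow> lab bstate \<Rightarrow> complex"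
  where "encoded_amp r enc Q x y = (\<Prod>i\<in>Q. enc (x i) (shares_of r i y))"

definition encoded_state :: "nat \<Rightarrow> nat \<Rightarrow> (bool \<Rightarrow> nat qstate) \<Rightarrow> nat qstate \<Rightarrow> lab qstate"
  where "encoded_state r n enc \<Gamma> y =
    (if y \<in> basis (share_labels r {..<n})
     then \<Sum>x\<in>basis {..<n}. \<Gamma> x * encoded_amp r enc {..<n} x y else 0)"

lemma codewords_orthonormal:
  assumes "valid_code r enc T K"
  shows "(\<Sum>w\<in>basis {..<r}. enc b w * cnj (enc c w)) = (if b = c then 1 else 0)"
proof -
  have "inner {..<r} (enc c) (enc b) = (if c = b then 1 else 0)"
    using assms by (simp add: valid_code_def)
  thus ?thesis by (auto simp: inner_def mult.commute)
qed

lemma valid_code_pos: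
  assumes "valid_code r enc T K"
  shows "0 < r"
proof (rule ccontr)
  assume "\<not> 0 < r"
  then have "basis {..<r} = {\<lambda>_. False}" by (auto simp: basis_def)
  then have "enc b (\<lambda>_. False) * cnj (enc c (\<lambda>_. False)) = (if b = c then 1 else 0)" for b c
    using codewords_orthonormal[OF assms, of b c] by simp
  from this[of False True] this[of False False] this[of True True] show False
    by auto
qed

lemma encoded_amp_orthonormal:
  assumes "valid_code r enc T K" and "finite R"
  shows "(\<Sum>z\<in>basis (share_labels r R). encoded_amp r enc R x z * cnj (encoded_amp r enc R x' z))
           = (if \<forall>i\<in>R. x i = x' i then 1 else 0)"
proof -
  have "(\<Sum>z\<in>basis (share_labels r R). encoded_amp r enc R x z * cnj (encoded_amp r enc R x' z))
      = (\<Prod>i\<in>R. \<Sum>w\<in>basis {..<r}. enc (x i) w * cnj (enc (x' i) w))"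
    unfolding encoded_amp_def cnj_prod prod.distrib[symmetric]
    by (rule sum_share_basis_prod[OF assms(2)])
  also have "\<dots> = (if \<forall>i\<in>R. x i = x' i then 1 else 0)"
    by (simp add: codewords_orthonormal[OF assms(1)] prod_indicator[OF assms(2)])
  finally show ?thesis .
qed

lemma encoded_state_merge:
  assumes "Q \<subseteq> {..<n}" "y \<in> basis (share_labels r Q)" "z \<in> basis (share_labels r ({..<n} - Q))"
  shows "encoded_state r n enc \<Gamma> (merge (share_labels r Q) y z)
       = (\<Sum>x\<in>basis {..<n}. \<Gamma> x * (encoded_amp r enc Q x y * encoded_amp r enc ({..<n} - Q) x z))"
proof -
  have "merge (share_labels r Q) y z \<in> basis (share_labels r {..<n})"
    using assms share_labels_mono[OF assms(1), of r]
    by (auto simp: basis_def merge_def share_labels_diff[symmetric])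
  moreover have "encoded_amp r enc {..<n} x (merge (share_labels r Q) y z)
      = encoded_amp r enc Q x y * encoded_amp r enc ({..<n} - Q) x z" for x
    using assms(1) by (simp add: encoded_amp_def shares_of_merge prod.subset_diff mult.commute)
  ultimately show ?thesis by (simp add: encoded_state_def)
qed

lemma nrm2_encoded_state:
  assumes "valid_code r enc T K"
  shows "nrm2 (share_labels r {..<n}) (encoded_state r n enc \<Gamma>) = nrm2 {..<n} \<Gamma>"
proof -
  let ?B = "basis {..<n::nat}"
  have "complex_of_real (nrm2 (share_labels r {..<n}) (encoded_state r n enc \<Gamma>))
      = (\<Sum>y\<in>basis (share_labels r {..<n}).
           (\<Sum>x\<in>?B. \<Gamma> x * encoded_amp r enc {..<n} x y) * cnj (\<Sum>x'\<in>?B. \<Gamma> x' * encoded_amp r enc {..<n} x' y))"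
    by (simp add: nrm2_as_complex encoded_state_def)
  also have "\<dots> = (\<Sum>x\<in>?B. \<Sum>x'\<in>?B. \<Gamma> x * cnj (\<Gamma> x') * (if \<forall>i\<in>{..<n}. x i = x' i then 1 else 0))"
    unfolding sum_mult_cnj_sums by (simp add: encoded_amp_orthonormal[OF assms])
  also have "\<dots> = (\<Sum>x\<in>?B. \<Sum>x'\<in>?B. \<Gamma> x * cnj (\<Gamma> x') * (if x = x' then 1 else 0))"
    by (intro sum.cong refl) (simp add: basis_eq_iff)
  also have "\<dots> = complex_of_real (nrm2 {..<n} \<Gamma>)"
    by (simp add: sum_sum_diagonal finite_basis nrm2_as_complex)
  finally show ?thesis by (simp only: of_real_eq_iff)
qed

lemma codeword_component_encoded_state:
  assumes code: "valid_code r enc T K" and "i < n" and "z \<in> basis (share_labels r ({..<n} - {i}))"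
  shows "(\<Sum>y\<in>basis (share_labels r {i}).
            cnj (enc b (shares_of r i y)) * encoded_state r n enc \<Gamma> (merge (share_labels r {i}) y z))
       = (\<Sum>x\<in>basis {..<n}. (\<Gamma> x * (if x i = b then 1 else 0)) * encoded_amp r enc ({..<n} - {i}) x z)"
proof -
  let ?amp = "encoded_amp r enc"
  have "(\<Sum>y\<in>basis (share_labels r {i}).
          cnj (enc b (shares_of r i y)) * encoded_state r n enc \<Gamma> (merge (share_labels r {i}) y z))
      = (\<Sum>y\<in>basis (share_labels r {i}). \<Sum>x\<in>basis {..<n}.
           (\<Gamma> x * ?amp ({..<n} - {i}) x z) * (?amp {i} x y * cnj (?amp {i} (\<lambda>_. b) y)))"
    using assms(2,3)
    by (intro sum.cong refl) (simp add: encoded_state_merge sum_distrib_left encoded_amp_def mult_ac)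
  also have "\<dots> = (\<Sum>x\<in>basis {..<n}. (\<Gamma> x * ?amp ({..<n} - {i}) x z)
           * (\<Sum>y\<in>basis (share_labels r {i}). ?amp {i} x y * cnj (?amp {i} (\<lambda>_. b) y)))"
    by (subst sum.swap) (simp only: sum_distrib_left)
  finally show ?thesis by (simp add: encoded_amp_orthonormal[OF code] mult_ac)
qed

lemma test2_accept_encoded_state:
  assumes code: "valid_code r enc T K" and "i < n"
  shows "test2_accept r n 0 enc i (encoded_state r n enc \<Gamma>) = nrm2 {..<n} \<Gamma>"
proof -
  let ?B = "basis {..<n::nat}"
  let ?R = "{..<n} - {i}"
  let ?amp = "encoded_amp r enc"
  have "complex_of_real (test2_accept r n 0 enc i (encoded_state r n enc \<Gamma>))
      = (\<Sum>z\<in>basis (share_labels r ?R). \<Sum>b\<in>UNIV.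
           (\<Sum>x\<in>?B. (\<Gamma> x * (if x i = b then 1 else 0)) * ?amp ?R x z)
           * cnj (\<Sum>x'\<in>?B. (\<Gamma> x' * (if x' i = b then 1 else 0)) * ?amp ?R x' z))"
    unfolding test2_accept_def all_labels_no_private share_labels_diff
    by (simp add: cmod_square_cnj codeword_component_encoded_state[OF assms])
  also have "\<dots> = (\<Sum>b\<in>UNIV. \<Sum>z\<in>basis (share_labels r ?R).
           (\<Sum>x\<in>?B. (\<Gamma> x * (if x i = b then 1 else 0)) * ?amp ?R x z)
           * cnj (\<Sum>x'\<in>?B. (\<Gamma> x' * (if x' i = b then 1 else 0)) * ?amp ?R x' z))"
    by (rule sum.swap)
  also have "\<dots> = (\<Sum>b\<in>UNIV. \<Sum>x\<in>?B. \<Sum>x'\<in>?B. \<Gamma> x * cnj (\<Gamma> x')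
           * (if x i = b \<and> x' i = b \<and> (\<forall>j\<in>?R. x j = x' j) then 1 else 0))"
    unfolding sum_mult_cnj_sums by (intro sum.cong refl) (simp add: encoded_amp_orthonormal[OF code])
  also have "\<dots> = (\<Sum>x\<in>?B. \<Sum>x'\<in>?B. \<Sum>b\<in>UNIV. \<Gamma> x * cnj (\<Gamma> x')
           * (if x i = b \<and> x' i = b \<and> (\<forall>j\<in>?R. x j = x' j) then 1 else 0))"
    by (subst sum.swap) (rule sum.cong[OF refl], rule sum.swap)
  also have "\<dots> = (\<Sum>x\<in>?B. \<Sum>x'\<in>?B. \<Gamma> x * cnj (\<Gamma> x') * (if x = x' then 1 else 0))"
  proof (intro sum.cong refl)
    fix x x' assume "x \<in> ?B" "x' \<in> ?B"
    then have "x = x' \<longleftrightarrow> x i = x' i \<and> (\<forall>j\<in>?R. x j = x' j)"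
      using \<open>i < n\<close> by (auto simp: basis_eq_iff)
    then show "(\<Sum>b\<in>UNIV. \<Gamma> x * cnj (\<Gamma> x') * (if x i = b \<and> x' i = b \<and> (\<forall>j\<in>?R. x j = x' j) then 1 else 0))
        = \<Gamma> x * cnj (\<Gamma> x') * (if x = x' then 1 else 0)"
      by (cases "x i"; cases "x' i") (simp_all add: UNIV_bool)
  qed
  also have "\<dots> = complex_of_real (nrm2 {..<n} \<Gamma>)"
    by (simp add: sum_sum_diagonal finite_basis nrm2_as_complex)
  finally show ?thesis by (simp only: of_real_eq_iff)
qed

section \<open>Exact decoding on the codespace\<close>

text \<open>Polarization on \<open>\<complex>\<^sup>2\<close>: test the form on the unit vectors |0>, |1>, |+> and |+i>.\<close>

lemma qubit_form_eq_zero: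
  fixes F :: "bool \<Rightarrow> bool \<Rightarrow> complex"
  assumes form: "\<And>\<phi>. (cmod (\<phi> False))\<^sup>2 + (cmod (\<phi> True))\<^sup>2 = 1 \<Longrightarrow>
                  (\<Sum>c\<in>UNIV. \<Sum>c'\<in>UNIV. \<phi> c * cnj (\<phi> c') * F c c') = 0"
  shows "F c c' = 0"
proof -
  define s where "s = complex_of_real (sqrt (1/2))"
  have s: "s \<noteq> 0" "s * s = 1/2" "cnj s = s" "(cmod s)\<^sup>2 = 1/2"
    by (simp_all add: s_def flip: of_real_mult)
  have diag: "F False False = 0" "F True True = 0"
    using form[of "\<lambda>c. if c then 0 else 1"] form[of "\<lambda>c. if c then 1 else 0"]
    by (simp_all add: UNIV_bool)
  have "F False True + F True False = 0"
    using form[of "\<lambda>_. s"] s diag by (simp add: UNIV_bool field_simps)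
  moreover have "F True False - F False True = 0"
    using form[of "\<lambda>c. if c then \<i> * s else s"] s diag by (simp add: UNIV_bool norm_mult field_simps)
  ultimately have "F False True = 0" "F True False = 0"
    by (simp_all add: algebra_simps)
  with diag show ?thesis by (cases c; cases c') simp_all
qed

lemma single_qubit_op_pauli_identity: "single_qubit_op q (pauli 0) = id_op"
  by (auto simp: single_qubit_op_def pauli_def id_op_def fun_eq_iff)

text \<open>The matrix entry \<open>\<langle>b| K t |enc c\<rangle>\<close> of a Kraus operator of the decoder restricted to the codespace.\<close>

definition logical_kraus :: "nat \<Rightarrow> (bool \<Rightarrow> nat qstate) \<Rightarrow> ('c \<Rightarrow> bool \<Rightarrow> nat bstate \<Rightarrow> complex)
    \<Rightarrow> 'c \<Rightarrow> bool \<Rightarrow> bool \<Rightarrow> complex"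
  where "logical_kraus r enc K t b c = (\<Sum>w\<in>basis {..<r}. K t b w * enc c w)"

lemma decode_pure_enc_state:
  "decode_pure r T K (enc_state enc \<phi>) b b'
     = (\<Sum>c\<in>UNIV. \<Sum>c'\<in>UNIV. \<phi> c * cnj (\<phi> c')
          * (\<Sum>t\<in>T. logical_kraus r enc K t b c * cnj (logical_kraus r enc K t b' c')))"
proof -
  have "(\<Sum>w\<in>basis {..<r}. K t b w * enc_state enc \<phi> w) = (\<Sum>c\<in>UNIV. \<phi> c * logical_kraus r enc K t b c)"
    for t b
    by (simp add: enc_state_def logical_kraus_def UNIV_bool sum_distrib_left sum.distrib algebra_simps)
  then show ?thesis
    unfolding decode_pure_def by (simp only: sum_mult_cnj_sums)
qed

lemma decode_codeword:
  assumes "corrects_single_paulis r enc T K" and "0 < r"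
    and "(cmod (\<phi> False))\<^sup>2 + (cmod (\<phi> True))\<^sup>2 = 1"
  shows "decode_pure r T K (enc_state enc \<phi>) b b' = \<phi> b * cnj (\<phi> b')"
proof -
  \<comment> \<open>only the trivial error, the Pauli identity on qubit 0, is needed\<close>
  have "decode_pure r T K (apply_op {..<r} (single_qubit_op 0 (pauli 0)) (enc_state enc \<phi>))
      = (\<lambda>b b'. \<phi> b * cnj (\<phi> b'))"
    using assms unfolding corrects_single_paulis_def by simp
  then have "decode_pure r T K (apply_op {..<r} id_op (enc_state enc \<phi>)) = (\<lambda>b b'. \<phi> b * cnj (\<phi> b'))"
    by (simp only: single_qubit_op_pauli_identity)
  moreover have "decode_pure r T K (apply_op {..<r} id_op \<chi>) = decode_pure r T K \<chi>" for \<chi>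
    by (simp add: decode_pure_def apply_op_id_op cong: sum.cong)
  ultimately show ?thesis by simp
qed

lemma logical_kraus_orthonormal:
  assumes "corrects_single_paulis r enc T K" and "0 < r"
  shows "(\<Sum>t\<in>T. logical_kraus r enc K t b c * cnj (logical_kraus r enc K t b' c'))
           = (if b = c \<and> b' = c' then 1 else 0)"
proof -
  define F where "F c c' = (\<Sum>t\<in>T. logical_kraus r enc K t b c * cnj (logical_kraus r enc K t b' c'))
      - (if b = c \<and> b' = c' then 1 else 0)" for c c'
  have "F c c' = 0"
  proof (rule qubit_form_eq_zero)
    fix \<phi> :: "bool \<Rightarrow> complex"
    assume unit: "(cmod (\<phi> False))\<^sup>2 + (cmod (\<phi> True))\<^sup>2 = 1"
    have "(\<Sum>c\<in>UNIV. \<Sum>c'\<in>UNIV. \<phi> c * cnj (\<phi> c') * (if b = c \<and> b' = c' then 1 else 0)) = \<phi> b * cnj (\<phi> b')"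
      by (cases b; cases b') (simp_all add: UNIV_bool)
    then show "(\<Sum>c\<in>UNIV. \<Sum>c'\<in>UNIV. \<phi> c * cnj (\<phi> c') * F c c') = 0"
      using decode_codeword[OF assms unit, of b b'] decode_pure_enc_state[of r T K enc \<phi> b b']
      by (simp add: F_def right_diff_distrib sum_subtractf)
  qed
  then show ?thesis by (simp add: F_def)
qed

lemma logical_kraus_product_orthonormal:
  assumes "corrects_single_paulis r enc T K" "0 < r" "finite T" "finite Q"
  shows "(\<Sum>tt\<in>Pi\<^sub>E Q (\<lambda>_. T). (\<Prod>i\<in>Q. logical_kraus r enc K (tt i) (w i) (u i))
            * cnj (\<Prod>i\<in>Q. logical_kraus r enc K (tt i) (x i) (v i)))
       = (if \<forall>i\<in>Q. w i = u i \<and> x i = v i then 1 else 0)"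
proof -
  have "(\<Sum>tt\<in>Pi\<^sub>E Q (\<lambda>_. T). (\<Prod>i\<in>Q. logical_kraus r enc K (tt i) (w i) (u i))
            * cnj (\<Prod>i\<in>Q. logical_kraus r enc K (tt i) (x i) (v i)))
      = (\<Prod>i\<in>Q. \<Sum>t\<in>T. logical_kraus r enc K t (w i) (u i) * cnj (logical_kraus r enc K t (x i) (v i)))"
    unfolding cnj_prod prod.distrib[symmetric] by (rule prod_sum_PiE[OF assms(4,3), symmetric])
  then show ?thesis
    by (simp add: logical_kraus_orthonormal[OF assms(1,2)] prod_indicator[OF assms(4)])
qed

text \<open>The partial trace of \<open>|\<Gamma>\<rangle>\<langle>\<Gamma>|\<close> over the qubits \<open>L - Q\<close>.\<close>

definition reduced_state :: "'l set \<Rightarrow> 'l set \<Rightarrow> 'l qstate \<Rightarrow> 'l qop" where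
  "reduced_state L Q \<Gamma> w x = (\<Sum>z\<in>basis (L - Q). \<Gamma> (merge Q w z) * cnj (\<Gamma> (merge Q x z)))"

lemma sum_agreeing_pairs:
  assumes "finite L" "Q \<subseteq> L" "w \<in> basis Q" "x \<in> basis Q"
  shows "(\<Sum>u\<in>basis L. \<Sum>v\<in>basis L.
            if (\<forall>i\<in>Q. u i = w i \<and> v i = x i) \<and> (\<forall>i\<in>L - Q. u i = v i) then F u v else 0)
       = (\<Sum>z\<in>basis (L - Q). F (merge Q w z) (merge Q x z))"
proof -
  have fin: "finite (basis Q)" "finite (basis (L - Q))"
    using assms(1,2) by (simp_all add: finite_basis finite_subset)
  have cond: "((\<forall>i\<in>Q. merge Q a z i = w i \<and> merge Q b z' i = x i)
              \<and> (\<forall>i\<in>L - Q. merge Q a z i = merge Q b z' i))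
           \<longleftrightarrow> z' = z \<and> b = x \<and> a = w"
    if "a \<in> basis Q" "b \<in> basis Q" "z \<in> basis (L - Q)" "z' \<in> basis (L - Q)" for a b z z'
    using that assms(3,4) by (auto simp: merge_def basis_eq_iff)
  have "(\<Sum>u\<in>basis L. \<Sum>v\<in>basis L.
            if (\<forall>i\<in>Q. u i = w i \<and> v i = x i) \<and> (\<forall>i\<in>L - Q. u i = v i) then F u v else 0)
      = (\<Sum>a\<in>basis Q. \<Sum>z\<in>basis (L - Q). \<Sum>b\<in>basis Q. \<Sum>z'\<in>basis (L - Q).
            if z' = z \<and> b = x \<and> a = w then F (merge Q a z) (merge Q b z') else 0)"
    by (simp add: sum_basis_merge[OF assms(2)] cond cong: sum.cong)
  also have "\<dots> = (\<Sum>a\<in>basis Q. \<Sum>z\<in>basis (L - Q). if a = w then F (merge Q a z) (merge Q x z) else 0)"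
    using fin assms(4) by (simp add: if_if_eq_conj[symmetric] cong: sum.cong)
  also have "\<dots> = (\<Sum>z\<in>basis (L - Q). F (merge Q w z) (merge Q x z))"
    using fin assms(3) by (subst sum.swap) simp
  finally show ?thesis .
qed

lemma lift_as_sum:
  assumes "finite L" "Q \<subseteq> L" "u \<in> basis L" "v \<in> basis L"
  shows "lift Q A u v = (\<Sum>x\<in>basis Q. \<Sum>w\<in>basis Q.
           if (\<forall>i\<in>Q. v i = w i \<and> u i = x i) \<and> (\<forall>i\<in>L - Q. v i = u i) then A x w else 0)"
proof -
  let ?agree = "\<forall>i\<in>L - Q. v i = u i"
  have fin: "finite (basis Q)" using assms(1,2) by (simp add: finite_basis finite_subset)
  have restr: "restr Q y \<in> basis Q" for y by (simp add: basis_def restr_def)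
  have "(\<Sum>x\<in>basis Q. \<Sum>w\<in>basis Q.
           if (\<forall>i\<in>Q. v i = w i \<and> u i = x i) \<and> ?agree then A x w else 0)
      = (\<Sum>x\<in>basis Q. \<Sum>w\<in>basis Q.
           if w = restr Q v then if x = restr Q u then if ?agree then A x w else 0 else 0 else 0)"
    by (intro sum.cong refl) (auto simp: basis_def restr_def fun_eq_iff)
  also have "\<dots> = (if ?agree then A (restr Q u) (restr Q v) else 0)"
    using fin restr by simp
  also have "\<dots> = lift Q A u v"
    using assms(3,4) by (auto simp: lift_def basis_def)
  finally show ?thesis by simp
qed

lemma sum_swap_pairs:
  "(\<Sum>a\<in>A. \<Sum>b\<in>B. \<Sum>c\<in>C. \<Sum>d\<in>D. f a b c d) = (\<Sum>c\<in>C. \<Sum>d\<in>D. \<Sum>a\<in>A. \<Sum>b\<in>B. f a b c d)"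
proof -
  have "(\<Sum>a\<in>A. \<Sum>b\<in>B. \<Sum>c\<in>C. \<Sum>d\<in>D. f a b c d) = (\<Sum>a\<in>A. \<Sum>c\<in>C. \<Sum>b\<in>B. \<Sum>d\<in>D. f a b c d)"
    by (rule sum.cong[OF refl], rule sum.swap)
  also have "\<dots> = (\<Sum>c\<in>C. \<Sum>a\<in>A. \<Sum>d\<in>D. \<Sum>b\<in>B. f a b c d)"
    by (subst sum.swap) (intro sum.cong refl, rule sum.swap)
  also have "\<dots> = (\<Sum>c\<in>C. \<Sum>d\<in>D. \<Sum>a\<in>A. \<Sum>b\<in>B. f a b c d)"
    by (rule sum.cong[OF refl], rule sum.swap)
  finally show ?thesis .
qed

lemma expectation_lift:
  assumes "finite L" "Q \<subseteq> L"
  shows "inner L \<Gamma> (apply_op L (lift Q A) \<Gamma>)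
           = (\<Sum>x\<in>basis Q. \<Sum>w\<in>basis Q. A x w * reduced_state L Q \<Gamma> w x)"
proof -
  let ?agree = "\<lambda>x w u v. (\<forall>i\<in>Q. v i = w i \<and> u i = x i) \<and> (\<forall>i\<in>L - Q. v i = u i)"
  have "inner L \<Gamma> (apply_op L (lift Q A) \<Gamma>)
      = (\<Sum>v\<in>basis L. \<Sum>u\<in>basis L. cnj (\<Gamma> u) * (lift Q A u v * \<Gamma> v))"
    unfolding inner_def apply_op_def by (subst sum.swap) (simp add: sum_distrib_left)
  also have "\<dots> = (\<Sum>v\<in>basis L. \<Sum>u\<in>basis L. \<Sum>x\<in>basis Q. \<Sum>w\<in>basis Q.
           A x w * (if ?agree x w u v then \<Gamma> v * cnj (\<Gamma> u) else 0))"
    by (intro sum.cong refl)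
      (simp add: lift_as_sum[OF assms] sum_distrib_left sum_distrib_right, intro sum.cong refl, simp)
  also have "\<dots> = (\<Sum>x\<in>basis Q. \<Sum>w\<in>basis Q. A x w * (\<Sum>v\<in>basis L. \<Sum>u\<in>basis L.
           if ?agree x w u v then \<Gamma> v * cnj (\<Gamma> u) else 0))"
    by (subst sum_swap_pairs) (simp only: sum_distrib_left)
  also have "\<dots> = (\<Sum>x\<in>basis Q. \<Sum>w\<in>basis Q. A x w * reduced_state L Q \<Gamma> w x)"
    using assms by (simp add: sum_agreeing_pairs reduced_state_def)
  finally show ?thesis .
qed

lemma sum_inner_apply_op:
  "(\<Sum>t\<in>I. inner Q (v t) (apply_op Q A (v t)))
     = (\<Sum>x\<in>basis Q. \<Sum>w\<in>basis Q. A x w * (\<Sum>t\<in>I. v t w * cnj (v t x)))"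
proof -
  have "(\<Sum>t\<in>I. inner Q (v t) (apply_op Q A (v t)))
      = (\<Sum>t\<in>I. \<Sum>x\<in>basis Q. \<Sum>w\<in>basis Q. A x w * (v t w * cnj (v t x)))"
    by (simp add: inner_def apply_op_def sum_distrib_left mult_ac)
  also have "\<dots> = (\<Sum>x\<in>basis Q. \<Sum>w\<in>basis Q. \<Sum>t\<in>I. A x w * (v t w * cnj (v t x)))"
    by (subst sum.swap) (rule sum.cong[OF refl], rule sum.swap)
  finally show ?thesis by (simp add: sum_distrib_left)
qed

section \<open>Test 1 on the encoded state\<close>

text \<open>The vector \<open>v\<close> of \<open>test1_reject\<close>: the decoded state on Q for Kraus outcomes tt and basis
state z of the remaining labels.\<close>

definition decoded_branch ::
  "nat \<Rightarrow> ('c \<Rightarrow> bool \<Rightarrow> nat bstate \<Rightarrow> complex) \<Rightarrow> nat set \<Rightarrow> (nat \<Rightarrow> 'c) \<Rightarrow> lab bstate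
    \<Rightarrow> lab qstate \<Rightarrow> nat qstate" where
  "decoded_branch r K Q tt z \<phi> w = (\<Sum>y\<in>basis (share_labels r Q).
     (\<Prod>i\<in>Q. K (tt i) (w i) (shares_of r i y)) * \<phi> (merge (share_labels r Q) y z))"

lemma test1_reject_as_branches:
  "test1_reject r n d T K Q h \<phi>
     = Re (\<Sum>p\<in>Pi\<^sub>E Q (\<lambda>_. T) \<times> basis (all_labels r n d - share_labels r Q).
             inner Q (decoded_branch r K Q (fst p) (snd p) \<phi>)
               (apply_op Q h (decoded_branch r K Q (fst p) (snd p) \<phi>)))"
  unfolding test1_reject_def decoded_branch_def Let_def
  by (simp add: Re_sum sum.cartesian_product split_def)

lemma decoded_branch_encoded_state:
  assumes "Q \<subseteq> {..<n}" "finite Q" "z \<in> basis (share_labels r ({..<n} - Q))"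
  shows "decoded_branch r K Q tt z (encoded_state r n enc \<Gamma>) w
     = (\<Sum>x\<in>basis {..<n}. \<Gamma> x * ((\<Prod>i\<in>Q. logical_kraus r enc K (tt i) (w i) (x i))
                                  * encoded_amp r enc ({..<n} - Q) x z))"
proof -
  let ?B = "basis {..<n::nat}"
  let ?K = "\<lambda>y. \<Prod>i\<in>Q. K (tt i) (w i) (shares_of r i y)"
  have kraus: "(\<Sum>y\<in>basis (share_labels r Q). ?K y * encoded_amp r enc Q x y)
      = (\<Prod>i\<in>Q. logical_kraus r enc K (tt i) (w i) (x i))" for x
    unfolding encoded_amp_def logical_kraus_def prod.distrib[symmetric]
    by (rule sum_share_basis_prod[OF assms(2)])
  have "decoded_branch r K Q tt z (encoded_state r n enc \<Gamma>) w
      = (\<Sum>y\<in>basis (share_labels r Q). \<Sum>x\<in>?B.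
           (\<Gamma> x * encoded_amp r enc ({..<n} - Q) x z) * (?K y * encoded_amp r enc Q x y))"
    unfolding decoded_branch_def using assms(1,3)
    by (intro sum.cong refl) (simp add: encoded_state_merge sum_distrib_left mult_ac)
  also have "\<dots> = (\<Sum>x\<in>?B. (\<Gamma> x * encoded_amp r enc ({..<n} - Q) x z)
           * (\<Sum>y\<in>basis (share_labels r Q). ?K y * encoded_amp r enc Q x y))"
    by (subst sum.swap) (simp only: sum_distrib_left)
  also have "\<dots> = (\<Sum>x\<in>?B. \<Gamma> x * ((\<Prod>i\<in>Q. logical_kraus r enc K (tt i) (w i) (x i))
                                  * encoded_amp r enc ({..<n} - Q) x z))"
    by (simp only: kraus) (simp add: mult_ac)
  finally show ?thesis .
qed

lemma decoded_reduced_state: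
  assumes code: "valid_code r enc T K" and corr: "corrects_single_paulis r enc T K" and "0 < r"
    and Q: "Q \<subseteq> {..<n}" and "w \<in> basis Q" "x \<in> basis Q"
  shows "(\<Sum>p\<in>Pi\<^sub>E Q (\<lambda>_. T) \<times> basis (share_labels r ({..<n} - Q)).
            decoded_branch r K Q (fst p) (snd p) (encoded_state r n enc \<Gamma>) w
            * cnj (decoded_branch r K Q (fst p) (snd p) (encoded_state r n enc \<Gamma>) x))
       = reduced_state {..<n} Q \<Gamma> w x"
proof -
  let ?B = "basis {..<n::nat}"
  let ?R = "{..<n} - Q"
  let ?G = "\<lambda>tt w u. \<Prod>i\<in>Q. logical_kraus r enc K (tt i) (w i) (u i)"
  have fin: "finite T" "finite Q" using code Q by (auto simp: valid_code_def finite_subset)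
  have factor: "(\<Sum>p\<in>Pi\<^sub>E Q (\<lambda>_. T) \<times> basis (share_labels r ?R).
            ?G (fst p) w u * encoded_amp r enc ?R u (snd p)
            * cnj (?G (fst p) x v * encoded_amp r enc ?R v (snd p)))
        = (\<Sum>tt\<in>Pi\<^sub>E Q (\<lambda>_. T). ?G tt w u * cnj (?G tt x v))
          * (\<Sum>z\<in>basis (share_labels r ?R). encoded_amp r enc ?R u z * cnj (encoded_amp r enc ?R v z))"
    for u v
    by (subst sum_product, subst sum.cartesian_product) (simp add: split_def mult_ac)
  have "(\<Sum>p\<in>Pi\<^sub>E Q (\<lambda>_. T) \<times> basis (share_labels r ?R).
            decoded_branch r K Q (fst p) (snd p) (encoded_state r n enc \<Gamma>) w
            * cnj (decoded_branch r K Q (fst p) (snd p) (encoded_state r n enc \<Gamma>) x))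
      = (\<Sum>p\<in>Pi\<^sub>E Q (\<lambda>_. T) \<times> basis (share_labels r ?R).
            (\<Sum>u\<in>?B. \<Gamma> u * (?G (fst p) w u * encoded_amp r enc ?R u (snd p)))
            * cnj (\<Sum>v\<in>?B. \<Gamma> v * (?G (fst p) x v * encoded_amp r enc ?R v (snd p))))"
    by (intro sum.cong refl) (auto simp: decoded_branch_encoded_state[OF Q fin(2)])
  also have "\<dots> = (\<Sum>u\<in>?B. \<Sum>v\<in>?B. \<Gamma> u * cnj (\<Gamma> v)
      * ((\<Sum>tt\<in>Pi\<^sub>E Q (\<lambda>_. T). ?G tt w u * cnj (?G tt x v))
         * (\<Sum>z\<in>basis (share_labels r ?R). encoded_amp r enc ?R u z * cnj (encoded_amp r enc ?R v z))))"
    by (simp only: sum_mult_cnj_sums factor)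
  also have "\<dots> = (\<Sum>u\<in>?B. \<Sum>v\<in>?B.
      if (\<forall>i\<in>Q. u i = w i \<and> v i = x i) \<and> (\<forall>i\<in>?R. u i = v i) then \<Gamma> u * cnj (\<Gamma> v) else 0)"
    unfolding logical_kraus_product_orthonormal[OF corr \<open>0 < r\<close> fin]
      encoded_amp_orthonormal[OF code finite_Diff[OF finite_lessThan]]
    by (intro sum.cong refl) auto
  also have "\<dots> = reduced_state {..<n} Q \<Gamma> w x"
    using sum_agreeing_pairs[OF _ Q assms(5,6)] by (simp add: reduced_state_def)
  finally show ?thesis .
qed

lemma test1_reject_encoded_state:
  assumes "valid_code r enc T K" "corrects_single_paulis r enc T K" "0 < r" "Q \<subseteq> {..<n}"
  shows "test1_reject r n 0 T K Q h (encoded_state r n enc \<Gamma>)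
           = Re (inner {..<n} \<Gamma> (apply_op {..<n} (lift Q h) \<Gamma>))"
proof -
  have "test1_reject r n 0 T K Q h (encoded_state r n enc \<Gamma>)
      = Re (\<Sum>x\<in>basis Q. \<Sum>w\<in>basis Q. h x w * (\<Sum>p\<in>Pi\<^sub>E Q (\<lambda>_. T) \<times> basis (share_labels r ({..<n} - Q)).
            decoded_branch r K Q (fst p) (snd p) (encoded_state r n enc \<Gamma>) w
            * cnj (decoded_branch r K Q (fst p) (snd p) (encoded_state r n enc \<Gamma>) x)))"
    unfolding test1_reject_as_branches all_labels_no_private share_labels_diff
    by (subst sum_inner_apply_op) (rule refl)
  also have "\<dots> = Re (\<Sum>x\<in>basis Q. \<Sum>w\<in>basis Q. h x w * reduced_state {..<n} Q \<Gamma> w x)"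
    using decoded_reduced_state[OF assms] by simp
  also have "\<dots> = Re (inner {..<n} \<Gamma> (apply_op {..<n} (lift Q h) \<Gamma>))"
    by (simp add: expectation_lift[OF finite_lessThan assms(4)])
  finally show ?thesis .
qed

lemma post_state_id_op:
  assumes "\<And>x. x \<notin> basis (all_labels r n d) \<Longrightarrow> \<psi> x = 0"
  shows "post_state r n d \<psi> (\<lambda>_ _. id_op) Qs = \<psi>"
proof -
  have "apply_op (all_labels r n d) id_op \<psi> = \<psi>"
  proof
    fix x show "apply_op (all_labels r n d) id_op \<psi> x = \<psi> x"
      using assms by (simp add: apply_op_id_op[OF finite_all_labels])
  qed
  then have "foldr (\<lambda>p. apply_op (all_labels r n d) (lift (prover_labels n d p) id_op)) ps \<psi> = \<psi>" for ps
    by (induction ps) (simp_all add: lift_id_op)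
  then show ?thesis by (simp add: post_state_def)
qed

lemma post_state_encoded_state:
  "post_state r n 0 (encoded_state r n enc \<Gamma>) (\<lambda>_ _. id_op) Qs = encoded_state r n enc \<Gamma>"
  by (rule post_state_id_op) (simp add: encoded_state_def all_labels_no_private)

lemma valid_strategy_encoded_state:
  assumes "valid_code r enc T K" and "nrm2 {..<n} \<Gamma> = 1"
  shows "valid_strategy r n 0 (encoded_state r n enc \<Gamma>) (\<lambda>_ _. id_op)"
  using assms by (simp add: valid_strategy_def all_labels_no_private nrm2_encoded_state
      unitary_on_id_op finite_prover_labels)

lemma ksets_card_pos:
  assumes "1 \<le> k" "k \<le> n" "i < n"
  shows "0 < card (ksets n k i)"
proof -
  have "finite (ksets n k i)"
    by (rule finite_subset[of _ "Pow {..<n}"]) (auto simp: ksets_def)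
  moreover have "(if i < k then {..<k} else insert i {..<k - 1}) \<in> ksets n k i"
    using assms by (auto simp: ksets_def)
  ultimately show ?thesis by (auto simp: card_gt_0_iff)
qed

lemma inner_hamiltonian:
  "inner L \<Gamma> (apply_op L (hamiltonian m S h) \<Gamma>) = (\<Sum>j<m. inner L \<Gamma> (apply_op L (lift (S j) (h j)) \<Gamma>))"
  by (simp add: inner_def apply_op_def hamiltonian_def sum_distrib_left sum_distrib_right
      sum.swap[of _ "basis L" "{..<m}"])

lemma accept_prob_perfect_test2:
  assumes "\<And>Qs. post_state r n d \<psi> U Qs = \<psi>" and "\<And>i. i < n \<Longrightarrow> test2_accept r n d enc i \<psi> = 1"
    and "0 < r" "1 \<le> k" "k \<le> n"
  shows "accept_prob n k m S h r enc T K d \<psi> U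
           = 1/2 * (1 / real m * (\<Sum>j<m. 1 - test1_reject r n d T K (S j) (h j) \<psi>)) + 1/2"
proof -
  have "1 / real (card (ksets n k i)) * (\<Sum>Q\<in>ksets n k i. 1/2 * (1 / real r * (\<Sum>p<r. 1)) + 1/2 * 1) = 1"
    if "i < n" for i
    using ksets_card_pos[OF assms(4,5) that] \<open>0 < r\<close> by simp
  then have "(\<Sum>i<n. 1 / real (card (ksets n k i))
      * (\<Sum>Q\<in>ksets n k i. 1/2 * (1 / real r * (\<Sum>p<r. test2_accept r n d enc i \<psi>))
                        + 1/2 * test2_accept r n d enc i \<psi>)) = real n"
    using assms(2) by simp
  then show ?thesis
    using assms(4,5) by (simp add: accept_prob_def assms(1))
qed

theorem mainTheorem4:
  fixes n k m r :: nat and S :: "nat \<Rightarrow> nat set" and h :: "nat \<Rightarrow> nat qop"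
    and enc :: "bool \<Rightarrow> nat qstate" and T :: "'c set"
    and K :: "'c \<Rightarrow> bool \<Rightarrow> nat bstate \<Rightarrow> complex"
    and a :: real and \<Gamma> :: "nat qstate"
  assumes "1 \<le> k" and "k \<le> n" and "1 \<le> m"
    and "klh_instance n k m S h"
    and "valid_code r enc T K"
    and "corrects_single_paulis r enc T K"
    and "single_marginals_mixed r enc"
    and "a \<ge> 0"
    and "nrm2 {..<n} \<Gamma> = 1"
    and "Re (inner {..<n} \<Gamma> (apply_op {..<n} (hamiltonian m S h) \<Gamma>)) \<le> a * real m"
  shows "\<exists>d \<psi> U. valid_strategy r n d \<psi> U \<and>
           accept_prob n k m S h r enc T K d \<psi> U \<ge> 1 - a / 2"
proof -
  \<comment> \<open>\<open>single_marginals_mixed\<close> and \<open>a \<ge> 0\<close> are only needed for soundness, not here.\<close>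
  have "0 < r" using assms(5) by (rule valid_code_pos)
  define \<psi> where "\<psi> = encoded_state r n enc \<Gamma>"
  define U :: "nat \<Rightarrow> nat set \<Rightarrow> lab qop" where "U = (\<lambda>_ _. id_op)"
  have "valid_strategy r n 0 \<psi> U"
    unfolding \<psi>_def U_def by (rule valid_strategy_encoded_state[OF assms(5,9)])
  have post: "post_state r n 0 \<psi> U Qs = \<psi>" for Qs
    unfolding \<psi>_def U_def by (rule post_state_encoded_state)
  moreover have "test2_accept r n 0 enc i \<psi> = 1" if "i < n" for i
    using assms(5,9) that by (simp add: \<psi>_def test2_accept_encoded_state)
  moreover have "test1_reject r n 0 T K (S j) (h j) \<psi> = Re (inner {..<n} \<Gamma> (apply_op {..<n} (lift (S j) (h j)) \<Gamma>))"
    if "j < m" for j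
    using assms(4) that unfolding \<psi>_def
    by (intro test1_reject_encoded_state[OF assms(5,6) \<open>0 < r\<close>]) (simp add: klh_instance_def)
  ultimately have "accept_prob n k m S h r enc T K 0 \<psi> U
      = 1 - Re (inner {..<n} \<Gamma> (apply_op {..<n} (hamiltonian m S h) \<Gamma>)) / (2 * real m)"
    using assms(1-3) \<open>0 < r\<close>
    by (simp add: accept_prob_perfect_test2[OF post] inner_hamiltonian Re_sum sum_subtractf field_simps)
  moreover have "Re (inner {..<n} \<Gamma> (apply_op {..<n} (hamiltonian m S h) \<Gamma>)) / (2 * real m) \<le> a / 2"
    using assms(3,10) by (simp add: field_simps)
  ultimately have "accept_prob n k m S h r enc T K 0 \<psi> U \<ge> 1 - a / 2"
    by linarith
  with \<open>valid_strategy r n 0 \<psi> U\<close> show ?thesis by blast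
qed

end
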